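(* Let $\varphi:\Sigma_2(\mathbb{N})\to C$ be a finite coloring and $k\ge0$ an integer. Then there exist an infinite set $\mathcal{N}\subseteq\mathbb{N}$ and colors $c_0,c_1,\dots,c_k\in C$ such that for each $0\le i\le k$, $\Sigma_2(\mathcal{N}+i)\subseteq\varphi^{-1}(c_i)$.
   Context: $\mathbb{N}=\{0,1,2,\dots\}$; $\Sigma_2(S)$ denotes the set of 2-element subsets of $S$; $\mathcal{N}+i=\{n+i:n\in\mathcal{N}\}$; $C$ is a finite non-empty set. *)

theory Defs
  imports Main
begin

definition Sigma2 :: "'a set \<Rightarrow> 'a set set" where
  "Sigma2 S = {e. e \<subseteq> S \<and> card e = 2}"

definition shift :: "nat set \<Rightarrow> nat \<Rightarrow> nat set" where
  "shift N i = (\<lambda>n. n + i) ` N"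

end

theory Submission
  imports Defs "HOL-Library.Ramsey"
begin

text \<open>
  Apply the infinite Ramsey theorem for pairs k+1 times in succession: at step i, colour a pair
  e of the current infinite set by the colour of its translate e + i, and pass to an infinite
  homogeneous subset. Homogeneity of the translates for earlier i survives passing to subsets.
\<close>

lemma Sigma2_eq_nsets: "Sigma2 S = [S]\<^bsup>2\<^esup>"
  by (auto simp: Sigma2_def nsets_def intro: card_ge_0_finite)

lemma Sigma2_mono: "A \<subseteq> B \<Longrightarrow> Sigma2 A \<subseteq> Sigma2 B"
  by (simp add: Sigma2_eq_nsets nsets_mono)

lemma Sigma2_shift: "Sigma2 (shift N i) = (\<lambda>e. shift e i) ` Sigma2 N"
proof -
  have "bij_betw (\<lambda>n. n + i) N (shift N i)"
    by (simp add: shift_def bij_betw_imageI)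
  then show ?thesis
    unfolding Sigma2_eq_nsets shift_def[abs_def]
    by (metis bij_betw_imp_surj_on bij_betw_nsets)
qed

corollary Ramsey_nsets_finite_colours:
  fixes f :: "'a set \<Rightarrow> 'c"
  assumes "infinite Z" "finite C" "f ` [Z]\<^bsup>r\<^esup> \<subseteq> C"
  obtains Y c where "Y \<subseteq> Z" "infinite Y" "c \<in> C" "f ` [Y]\<^bsup>r\<^esup> \<subseteq> {c}"
proof -
  obtain g where g: "bij_betw g C {..<card C}"
    using assms(2) ex_bij_betw_finite_nat atLeast0LessThan by metis
  have "(g \<circ> f) ` [Z]\<^bsup>r\<^esup> \<subseteq> {..<card C}"
    using assms(3) g by (auto simp: bij_betw_def)
  then obtain Y t where Y: "Y \<subseteq> Z" "infinite Y" "t < card C" "(g \<circ> f) ` [Y]\<^bsup>r\<^esup> \<subseteq> {t}"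
    using Ramsey_nsets[OF assms(1)] by metis
  have "f ` [Y]\<^bsup>r\<^esup> \<subseteq> {inv_into C g t}"
  proof
    fix x assume "x \<in> f ` [Y]\<^bsup>r\<^esup>"
    moreover have "[Y]\<^bsup>r\<^esup> \<subseteq> [Z]\<^bsup>r\<^esup>"
      using Y(1) by (rule nsets_mono)
    ultimately have "x \<in> C" "g x = t"
      using assms(3) Y(4) by auto
    then show "x \<in> {inv_into C g t}"
      using g by (auto simp: bij_betw_def)
  qed
  moreover have "inv_into C g t \<in> C"
    using g Y(3) by (metis bij_betw_imp_surj_on inv_into_into lessThan_iff)
  ultimately show thesis
    using that Y(1,2) by blast
qed

lemma infinite_subset_shift_homogeneous:
  fixes \<phi> :: "nat set \<Rightarrow> 'c"
  assumes "finite C" "\<phi> ` Sigma2 UNIV \<subseteq> C" "infinite Z"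
  obtains Y c where "Y \<subseteq> Z" "infinite Y" "c \<in> C" "Sigma2 (shift Y i) \<subseteq> \<phi> -` {c}"
proof -
  have "(\<lambda>e. \<phi> (shift e i)) ` [Z]\<^bsup>2\<^esup> \<subseteq> C"
    using assms(2) Sigma2_mono[of "shift Z i" UNIV]
    by (auto simp flip: Sigma2_eq_nsets simp: Sigma2_shift)
  then obtain Y c where "Y \<subseteq> Z" "infinite Y" "c \<in> C"
      "(\<lambda>e. \<phi> (shift e i)) ` [Y]\<^bsup>2\<^esup> \<subseteq> {c}"
    using Ramsey_nsets_finite_colours[OF assms(3,1)] by metis
  moreover from this(4) have "Sigma2 (shift Y i) \<subseteq> \<phi> -` {c}"
    unfolding Sigma2_shift by (auto simp: Sigma2_eq_nsets)
  ultimately show thesis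
    using that by blast
qed

theorem proposition3p1:
  fixes \<phi> :: "nat set \<Rightarrow> 'c" and C :: "'c set" and k :: nat
  assumes "finite C" and "C \<noteq> {}"
    and "\<forall>e \<in> Sigma2 (UNIV :: nat set). \<phi> e \<in> C"
  shows "\<exists>N :: nat set. infinite N \<and> (\<exists>c :: nat \<Rightarrow> 'c. (\<forall>i \<le> k. c i \<in> C) \<and>
           (\<forall>i \<le> k. Sigma2 (shift N i) \<subseteq> \<phi> -` {c i}))"
proof -
  have \<phi>C: "\<phi> ` Sigma2 UNIV \<subseteq> C"
    using assms(3) by blast
  show ?thesis
  proof (induction k)
    case 0
    obtain Y c where "infinite Y" "c \<in> C" "Sigma2 (shift Y 0) \<subseteq> \<phi> -` {c}"
      using infinite_subset_shift_homogeneous[OF assms(1) \<phi>C infinite_UNIV_nat] by metis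
    then show ?case
      by (intro exI[of _ Y] conjI exI[of _ "\<lambda>_. c"]) auto
  next
    case (Suc k)
    then obtain N c where N: "infinite N" "\<forall>i \<le> k. c i \<in> C"
        "\<forall>i \<le> k. Sigma2 (shift N i) \<subseteq> \<phi> -` {c i}"
      by blast
    obtain Y d where Y: "Y \<subseteq> N" "infinite Y" "d \<in> C"
        "Sigma2 (shift Y (Suc k)) \<subseteq> \<phi> -` {d}"
      using infinite_subset_shift_homogeneous[OF assms(1) \<phi>C N(1)] by metis
    have "Sigma2 (shift Y i) \<subseteq> Sigma2 (shift N i)" for i
      using Y(1) by (simp add: Sigma2_mono shift_def image_mono)
    then show ?case
      using N Y by (intro exI[of _ Y] conjI exI[of _ "c(Suc k := d)"])
        (fastforce simp: le_Suc_eq)+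
  qed
qed

end
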